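(* Let $0<\alpha<\varepsilon<1$ be constants, let $c=(1+\varepsilon)n$ and $\frac{\log n}{n}\le p\le\frac{2\log n}{n}$. Then with probability $1-o(1)$ the graph $G\sim\mathcal G_c(n,p)$ has the following property: for every $\mathcal C^*\subseteq[c]$ with $|\mathcal C^*|\ge(1+\alpha)n$, the graph $G[[n];\mathcal C^*]$ is $k$-rainbow-pseudorandom for $k=\frac{n}{\log^{0.49}n}$.
   Context: $\mathcal G_c(n,p)$: random graph on $[n]$, each pair an edge independently with probability $p$, each edge colored uniformly and independently from $[c]$. $G[[n];\mathcal C^*]$ is the spanning subgraph of $G$ consisting of the edges with color in $\mathcal C^*$. An edge-colored graph on $n$ vertices is $k$-rainbow-pseudorandom if for every two disjoint vertex sets $A,B$ with $|A|=|B|=k$, the number of distinct colors on the edges between $A$ and $B$ is at least $n$. Asymptotics as $n\to\infty$. *)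

theory Defs
  imports "HOL-Probability.Probability"
begin

text \<open>An edge-coloured graph on vertex set [n] = {1..n} is encoded as a function
  on ordered pairs (i,j) with i < j: None = no edge, Some x = edge of colour x.\<close>

definition vpairs :: "nat \<Rightarrow> (nat \<times> nat) set" where
  "vpairs n = {(i,j). 1 \<le> i \<and> i < j \<and> j \<le> n}"

definition edge_pmf :: "real \<Rightarrow> nat \<Rightarrow> nat option pmf" where
  "edge_pmf p c = bind_pmf (bernoulli_pmf p)
     (\<lambda>b. if b then map_pmf Some (pmf_of_set {1..c}) else return_pmf None)"

definition Gc :: "nat \<Rightarrow> real \<Rightarrow> nat \<Rightarrow> (nat \<times> nat \<Rightarrow> nat option) pmf" where
  "Gc n p c = Pi_pmf (vpairs n) None (\<lambda>_. edge_pmf p c)"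

definition ecol :: "(nat \<times> nat \<Rightarrow> nat option) \<Rightarrow> nat \<Rightarrow> nat \<Rightarrow> nat option" where
  "ecol G a b = G (min a b, max a b)"

definition restrict_colours :: "nat set \<Rightarrow> (nat \<times> nat \<Rightarrow> nat option) \<Rightarrow> (nat \<times> nat \<Rightarrow> nat option)" where
  "restrict_colours C G = (\<lambda>e. case G e of None \<Rightarrow> None | Some x \<Rightarrow> if x \<in> C then Some x else None)"

definition colours_between :: "(nat \<times> nat \<Rightarrow> nat option) \<Rightarrow> nat set \<Rightarrow> nat set \<Rightarrow> nat set" where
  "colours_between G A B = {x. \<exists>a\<in>A. \<exists>b\<in>B. ecol G a b = Some x}"

definition rainbow_pseudorandom :: "nat \<Rightarrow> nat \<Rightarrow> (nat \<times> nat \<Rightarrow> nat option) \<Rightarrow> bool" where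
  "rainbow_pseudorandom n k G \<longleftrightarrow>
     (\<forall>A B. A \<subseteq> {1..n} \<longrightarrow> B \<subseteq> {1..n} \<longrightarrow> A \<inter> B = {} \<longrightarrow> card A = k \<longrightarrow> card B = k
        \<longrightarrow> card (colours_between G A B) \<ge> n)"

end

theory Submission
  imports Defs "HOL-Real_Asymp.Real_Asymp"
begin

text \<open>First moment argument. If some admissible colour set C fails for the pair (A,B), then
  more than \<alpha>n colours of C are missing between A and B, so some set M of \<lceil>\<alpha>n\<rceil> colours is
  missing. For fixed A, B, M this has probability (1 - p|M|/c)^(k^2) \<le> exp(-p|M|k^2/c),
  and there are at most 2^(2n+c) triples (A,B,M). With p \<ge> ln n / n, c \<le> 2n and
  k \<ge> n / ln^0.49 n the exponent is at least \<alpha>n ln^0.02 n / 2, which beats 4n.\<close>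

type_synonym coloured_graph = "nat \<times> nat \<Rightarrow> nat option"

definition robustly_rainbow_pseudorandom :: "nat \<Rightarrow> nat \<Rightarrow> real \<Rightarrow> nat \<Rightarrow> coloured_graph \<Rightarrow> bool"
  where "robustly_rainbow_pseudorandom n c a k G \<longleftrightarrow>
    (\<forall>C. C \<subseteq> {1..c} \<longrightarrow> real (card C) \<ge> (1 + a) * n \<longrightarrow>
         rainbow_pseudorandom n k (restrict_colours C G))"

lemma finite_vpairs: "finite (vpairs n)"
  by (rule finite_subset[of _ "{1..n} \<times> {1..n}"]) (auto simp: vpairs_def)

lemma pmf_edge_pmf_Some:
  assumes "0 \<le> p" "p \<le> 1" "x \<in> {1..c}"
  shows "pmf (edge_pmf p c) (Some x) = p / c"
proof -
  have "pmf (map_pmf Some (pmf_of_set {1..c})) (Some x) = pmf (pmf_of_set {1..c}) x"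
    by (rule pmf_map_inj') auto
  also have "\<dots> = 1 / c" using assms by simp
  finally show ?thesis using assms by (simp add: edge_pmf_def pmf_bind)
qed

lemma prob_edge_pmf_avoids:
  assumes "0 \<le> p" "p \<le> 1" "M \<subseteq> {1..c}"
  shows "measure_pmf.prob (edge_pmf p c) (- (Some ` M)) = 1 - p * card M / c"
proof -
  have "finite M" using assms(3) finite_subset by blast
  then have "measure_pmf.prob (edge_pmf p c) (Some ` M) = (\<Sum>x\<in>M. pmf (edge_pmf p c) (Some x))"
    by (simp add: measure_measure_pmf_finite sum.reindex)
  also have "\<dots> = p * card M / c"
    using assms by (simp add: pmf_edge_pmf_Some subset_iff)
  finally show ?thesis
    using measure_pmf.prob_compl[of "Some ` M" "edge_pmf p c"] by (simp add: Compl_eq_Diff_UNIV)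
qed

lemma inj_on_sorted_pair:
  assumes "A \<inter> B = {}"
  shows "inj_on (\<lambda>(a, b). (min a b, max a b)) (A \<times> B)"
  using assms by (auto simp: inj_on_def min_def max_def split: if_splits)

lemma sorted_pair_in_vpairs:
  assumes "A \<subseteq> {1..n}" "B \<subseteq> {1..n}" "A \<inter> B = {}" "a \<in> A" "b \<in> B"
  shows "(min a b, max a b) \<in> vpairs n"
proof -
  have "a \<noteq> b" using assms(3-5) by blast
  then show ?thesis using assms(1,2,4,5) by (auto simp: vpairs_def min_def max_def)
qed

text \<open>The event depends only on the |A||B| independent pairs between A and B.\<close>
lemma prob_Gc_colours_between_disjoint:
  assumes "0 \<le> p" "p \<le> 1" "M \<subseteq> {1..c}"
    and AB: "A \<subseteq> {1..n}" "B \<subseteq> {1..n}" "A \<inter> B = {}"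
  shows "measure_pmf.prob (Gc n p c) {G. colours_between G A B \<inter> M = {}}
       = (1 - p * card M / c) ^ (card A * card B)"
proof -
  define P where "P = (\<lambda>(a, b). (min a b, max a b)) ` (A \<times> B)"
  have "finite A" "finite B" using AB finite_subset by blast+
  then have card_P: "card P = card A * card B"
    unfolding P_def by (simp add: card_image[OF inj_on_sorted_pair[OF AB(3)]] card_cartesian_product)
  have P_vpairs: "P \<subseteq> vpairs n"
    using sorted_pair_in_vpairs[OF AB] by (auto simp: P_def)
  have event: "{G. colours_between G A B \<inter> M = {}}
        = Pi (vpairs n) (\<lambda>e. if e \<in> P then - (Some ` M) else UNIV)"
  proof (intro set_eqI iffI)
    fix G assume "G \<in> {G. colours_between G A B \<inter> M = {}}"
    then show "G \<in> Pi (vpairs n) (\<lambda>e. if e \<in> P then - (Some ` M) else UNIV)"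
      by (fastforce simp: P_def ecol_def colours_between_def)
  next
    fix G assume G: "G \<in> Pi (vpairs n) (\<lambda>e. if e \<in> P then - (Some ` M) else UNIV)"
    have "ecol G a b \<notin> Some ` M" if "a \<in> A" "b \<in> B" for a b
    proof -
      have "(min a b, max a b) \<in> P" using that by (auto simp: P_def)
      then show ?thesis using G P_vpairs by (force simp: ecol_def)
    qed
    then show "G \<in> {G. colours_between G A B \<inter> M = {}}"
      by (auto simp: colours_between_def)
  qed
  have "measure_pmf.prob (Gc n p c) {G. colours_between G A B \<inter> M = {}}
      = (\<Prod>e\<in>vpairs n. measure_pmf.prob (edge_pmf p c) (if e \<in> P then - (Some ` M) else UNIV))"
    unfolding event Gc_def by (rule measure_Pi_pmf_Pi[OF finite_vpairs])
  also have "\<dots> = (\<Prod>e\<in>vpairs n. if e \<in> P then 1 - p * card M / c else 1)"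
    using assms by (intro prod.cong refl) (simp add: prob_edge_pmf_avoids)
  also have "\<dots> = (\<Prod>e\<in>vpairs n \<inter> P. 1 - p * card M / c)"
    by (rule prod.inter_restrict[OF finite_vpairs, symmetric])
  also have "vpairs n \<inter> P = P" using P_vpairs by blast
  finally show ?thesis by (simp add: card_P)
qed

lemma prob_Gc_colours_between_disjoint_le:
  assumes "0 \<le> p" "p \<le> 1" "c \<ge> 1" "M \<subseteq> {1..c}"
    and "A \<subseteq> {1..n}" "B \<subseteq> {1..n}" "A \<inter> B = {}"
  shows "measure_pmf.prob (Gc n p c) {G. colours_between G A B \<inter> M = {}}
       \<le> exp (- (p * card M / c) * (card A * card B))"
proof -
  have "card M \<le> c" using card_mono[OF _ assms(4)] by simp
  then have "p * card M \<le> 1 * real c" using assms(1,2) by (intro mult_mono) auto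
  then have "0 \<le> 1 - p * card M / c" using assms(3) by (simp add: field_simps)
  then have "(1 - p * card M / c) ^ (card A * card B) \<le> exp (- (p * card M / c)) ^ (card A * card B)"
    using exp_ge_add_one_self[of "- (p * card M / c)"] by (intro power_mono) auto
  also have "\<dots> = exp (- (p * card M / c) * (card A * card B))"
    by (simp add: exp_of_nat_mult[symmetric] algebra_simps)
  finally show ?thesis
    using prob_Gc_colours_between_disjoint[OF assms(1,2,4-7)] by simp
qed

lemma colours_between_restrict_colours:
  "colours_between (restrict_colours C G) A B = colours_between G A B \<inter> C"
proof -
  have "(case z of None \<Rightarrow> None | Some y \<Rightarrow> if y \<in> C then Some y else None) = Some x
      \<longleftrightarrow> z = Some x \<and> x \<in> C" for z x
    by (auto split: option.splits)
  then show ?thesis unfolding colours_between_def ecol_def restrict_colours_def by blast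
qed

lemma not_rainbow_pseudorandom_obtain_missing_colours:
  fixes a :: real
  assumes "C \<subseteq> {1..c}" "real (card C) \<ge> (1 + a) * n"
    and "\<not> rainbow_pseudorandom n k (restrict_colours C G)"
  obtains A B M where "A \<subseteq> {1..n}" "B \<subseteq> {1..n}" "A \<inter> B = {}" "card A = k" "card B = k"
    "M \<subseteq> {1..c}" "card M = nat \<lceil>a * n\<rceil>" "colours_between G A B \<inter> M = {}"
proof -
  obtain A B where AB: "A \<subseteq> {1..n}" "B \<subseteq> {1..n}" "A \<inter> B = {}" "card A = k" "card B = k"
    and few: "card (colours_between G A B \<inter> C) < n"
    using assms(3) by (auto simp: rainbow_pseudorandom_def colours_between_restrict_colours)
  define S where "S = colours_between G A B"
  have "finite C" using assms(1) finite_subset by blast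
  then have "card (C - S) = card C - card (C \<inter> S)" "card (C \<inter> S) \<le> card C"
    by (simp_all add: card_Diff_subset_Int card_mono)
  moreover have "card (C \<inter> S) < n" using few by (simp add: S_def Int_commute)
  ultimately have "real (card (C - S)) > a * n"
    using assms(2) by (simp add: of_nat_diff algebra_simps)
  then have "nat \<lceil>a * n\<rceil> \<le> card (C - S)" by (simp add: nat_le_iff ceiling_le_iff)
  then obtain M where M: "M \<subseteq> C - S" "card M = nat \<lceil>a * n\<rceil>"
    by (meson obtain_subset_with_card_n)
  have "M \<subseteq> {1..c}" "colours_between G A B \<inter> M = {}" using M(1) assms(1) by (auto simp: S_def)
  with AB M(2) show ?thesis by (intro that) auto
qed

lemma prob_not_robustly_rainbow_pseudorandom_le:
  fixes a p :: real
  assumes "0 \<le> p" "p \<le> 1" "c \<ge> 1"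
  shows "measure_pmf.prob (Gc n p c) (- {G. robustly_rainbow_pseudorandom n c a k G})
     \<le> 2 ^ (2 * n + c) * exp (- (p * nat \<lceil>a * n\<rceil> / c) * (k * k))"
proof -
  define m where "m = nat \<lceil>a * n\<rceil>"
  define I where "I = {(A, B, M). A \<subseteq> {1..n} \<and> B \<subseteq> {1..n} \<and> A \<inter> B = {} \<and>
      card A = k \<and> card B = k \<and> M \<subseteq> {1..c} \<and> card M = m}"
  define E where "E = (\<lambda>(A, B, M). {G. colours_between G A B \<inter> M = {}})"
  define bound where "bound = exp (- (p * m / c) * (k * k))"
  have I_sub: "I \<subseteq> Pow {1..n} \<times> Pow {1..n} \<times> Pow {1..c}" by (auto simp: I_def)
  then have "finite I" by (rule finite_subset) auto
  have card_I: "card I \<le> 2 ^ (2 * n + c)"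
    using card_mono[OF _ I_sub] by (simp add: card_cartesian_product card_Pow power_add mult_2)
  have "- {G. robustly_rainbow_pseudorandom n c a k G} \<subseteq> \<Union> (E ` I)"
  proof
    fix G assume "G \<in> - {G. robustly_rainbow_pseudorandom n c a k G}"
    then obtain C where "C \<subseteq> {1..c}" "real (card C) \<ge> (1 + a) * n"
        "\<not> rainbow_pseudorandom n k (restrict_colours C G)"
      by (auto simp: robustly_rainbow_pseudorandom_def)
    then obtain A B M where "(A, B, M) \<in> I" "G \<in> E (A, B, M)"
      by (rule not_rainbow_pseudorandom_obtain_missing_colours) (auto simp: I_def E_def m_def)
    then show "G \<in> \<Union> (E ` I)" by blast
  qed
  then have "measure_pmf.prob (Gc n p c) (- {G. robustly_rainbow_pseudorandom n c a k G})
      \<le> measure_pmf.prob (Gc n p c) (\<Union> (E ` I))"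
    by (rule measure_pmf.finite_measure_mono) simp
  also have "\<dots> \<le> (\<Sum>i\<in>I. measure_pmf.prob (Gc n p c) (E i))"
    by (rule measure_pmf.finite_measure_subadditive_finite[OF \<open>finite I\<close>]) simp
  also have "\<dots> \<le> (\<Sum>i\<in>I. bound)"
  proof (rule sum_mono)
    fix i assume "i \<in> I"
    then obtain A B M where "i = (A, B, M)" "A \<subseteq> {1..n}" "B \<subseteq> {1..n}" "A \<inter> B = {}"
       "card A = k" "card B = k" "M \<subseteq> {1..c}" "card M = m"
      by (auto simp: I_def)
    then show "measure_pmf.prob (Gc n p c) (E i) \<le> bound"
      using prob_Gc_colours_between_disjoint_le[OF assms, of M A n B] by (simp add: E_def bound_def)
  qed
  also have "\<dots> \<le> 2 ^ (2 * n + c) * bound"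
    using card_I by (simp add: bound_def)
  finally show ?thesis by (simp add: bound_def m_def)
qed

lemma two_power_le_exp: "(2::real) ^ m \<le> exp m"
proof -
  have "(2::real) ^ m = exp (m * ln 2)" by (simp add: exp_of_nat_mult)
  also have "\<dots> \<le> exp m" using ln_2_less_1 by (simp add: mult_left_le)
  finally show ?thesis .
qed

lemma failure_exponent_lower_bound:
  fixes \<alpha> q p m c n K k :: real
  assumes "0 < \<alpha>" "0 \<le> q" "q \<le> p" "\<alpha> * n \<le> m" "0 < c" "c \<le> 2 * n" "0 \<le> K" "K \<le> k"
  shows "\<alpha> * q * K\<^sup>2 / 2 \<le> p * m / c * k\<^sup>2"
proof -
  have "0 < n" using assms(5,6) by simp
  have pm: "q * (\<alpha> * n) \<le> p * m"
    using assms by (intro mult_mono) auto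
  moreover have "0 \<le> q * (\<alpha> * n)" using assms(1,2) \<open>0 < n\<close> by simp
  ultimately have "0 \<le> p * m" by linarith
  have "K\<^sup>2 \<le> k\<^sup>2" using assms(7,8) by (simp add: power_mono)
  with pm have "q * (\<alpha> * n) * K\<^sup>2 \<le> p * m * k\<^sup>2"
    using \<open>0 \<le> p * m\<close> by (rule mult_mono) simp
  then have "\<alpha> * q * K\<^sup>2 / 2 \<le> p * m * k\<^sup>2 / (2 * n)"
    using \<open>0 < n\<close> by (simp add: field_simps)
  also have "\<dots> \<le> p * m * k\<^sup>2 / c"
    using assms(5,6) \<open>0 \<le> p * m\<close> by (intro divide_left_mono) auto
  finally show ?thesis by simp
qed

lemma prob_robustly_rainbow_pseudorandom_lower_bound:
  fixes \<alpha> \<epsilon> p :: real and n :: nat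
  defines "c \<equiv> nat \<lfloor>(1 + \<epsilon>) * n\<rfloor>" and "k \<equiv> nat \<lceil>n / ln n powr 0.49\<rceil>"
  assumes "0 < \<alpha>" "0 < \<epsilon>" "\<epsilon> < 1" "n \<ge> 2" "ln n / n \<le> p" "p \<le> 1"
  shows "1 - exp (4 * real n - \<alpha> * n * ln n / (2 * (ln n powr 0.49)\<^sup>2))
     \<le> measure_pmf.prob (Gc n p c) {G. robustly_rainbow_pseudorandom n c \<alpha> k G}"
proof -
  define good where "good = {G. robustly_rainbow_pseudorandom n c \<alpha> k G}"
  define L where "L = ln n powr 0.49"
  define m where "m = nat \<lceil>\<alpha> * n\<rceil>"
  have "ln n > 0" "L > 0" using assms(6) by (simp_all add: L_def)
  have "0 \<le> ln n / n" using \<open>ln n > 0\<close> by simp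
  then have "0 \<le> p" using assms(7) by linarith
  have "1 * real n \<le> (1 + \<epsilon>) * n" "(1 + \<epsilon>) * n \<le> 2 * real n"
    using assms(4,5) by (intro mult_right_mono; simp)+
  then have c_bounds: "1 \<le> c" "real c \<le> 2 * n"
    using assms(6) unfolding c_def by linarith+
  have "\<alpha> * n \<le> m" "n / L \<le> k" unfolding m_def k_def L_def by linarith+
  then have "\<alpha> * (ln n / n) * (n / L)\<^sup>2 / 2 \<le> p * m / c * k\<^sup>2"
    using failure_exponent_lower_bound[of \<alpha> "ln n / n" p n m c "n / L" k] assms(3,7) c_bounds
      \<open>0 \<le> ln n / n\<close> \<open>L > 0\<close> by simp
  moreover have "\<alpha> * (ln n / n) * (n / L)\<^sup>2 / 2 = \<alpha> * n * ln n / (2 * L\<^sup>2)"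
    using assms(6) by (simp add: field_simps power2_eq_square)
  ultimately have "exp (- (p * m / c) * (k * k)) \<le> exp (- (\<alpha> * n * ln n / (2 * L\<^sup>2)))"
    by (simp add: power2_eq_square)
  moreover have "(2::real) ^ (2 * n + c) \<le> exp (4 * real n)"
    using two_power_le_exp[of "2 * n + c"] c_bounds by (simp add: order_trans)
  moreover have "measure_pmf.prob (Gc n p c) (- good) \<le> 2 ^ (2 * n + c) * exp (- (p * m / c) * (k * k))"
    using prob_not_robustly_rainbow_pseudorandom_le[of p c n \<alpha> k] \<open>0 \<le> p\<close> assms(8) c_bounds
    unfolding good_def m_def by simp
  ultimately have "measure_pmf.prob (Gc n p c) (- good)
      \<le> exp (4 * real n) * exp (- (\<alpha> * n * ln n / (2 * L\<^sup>2)))"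
    by (meson exp_ge_zero mult_mono order_trans)
  also have "\<dots> = exp (4 * real n - \<alpha> * n * ln n / (2 * L\<^sup>2))"
    by (simp add: mult_exp_exp)
  finally show ?thesis
    using measure_pmf.prob_compl[of good "Gc n p c"]
    by (simp add: good_def L_def Compl_eq_Diff_UNIV)
qed

theorem lemma12:
  fixes \<alpha> \<epsilon> :: real and p :: "nat \<Rightarrow> real"
  assumes "0 < \<alpha>" "\<alpha> < \<epsilon>" "\<epsilon> < 1"
    and "eventually (\<lambda>n. ln n / n \<le> p n \<and> p n \<le> 2 * ln n / n) sequentially"
  shows "(\<lambda>n. measure_pmf.prob (Gc n (p n) (nat \<lfloor>(1 + \<epsilon>) * n\<rfloor>))
            {G. \<forall>C. C \<subseteq> {1..nat \<lfloor>(1 + \<epsilon>) * n\<rfloor>} \<longrightarrow> real (card C) \<ge> (1 + \<alpha>) * n \<longrightarrow>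
                  rainbow_pseudorandom n (nat \<lceil>n / ln n powr 0.49\<rceil>) (restrict_colours C G)})
         \<longlonglongrightarrow> 1"
    (is "?prob \<longlonglongrightarrow> 1")
proof -
  define g where "g n = exp (4 * real n - \<alpha> * n * ln n / (2 * (ln n powr 0.49)\<^sup>2))" for n :: nat
  have "eventually (\<lambda>n. 2 * ln (real n) / real n \<le> 1) sequentially" by real_asymp
  then have "eventually (\<lambda>n. 1 - g n \<le> ?prob n) sequentially"
    using assms(4) eventually_ge_at_top[of 2]
  proof eventually_elim
    case (elim n)
    then have "p n \<le> 1" by linarith
    with elim show ?case
      using prob_robustly_rainbow_pseudorandom_lower_bound[of \<alpha> \<epsilon> n "p n"] assms(1-3)
      by (simp add: g_def robustly_rainbow_pseudorandom_def)
  qed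
  moreover have "eventually (\<lambda>n. ?prob n \<le> 1) sequentially"
    by (simp add: measure_pmf.prob_le_1)
  moreover have "g \<longlonglongrightarrow> 0" unfolding g_def using assms(1) by real_asymp
  then have "(\<lambda>n. 1 - g n) \<longlonglongrightarrow> 1"
    using tendsto_diff[OF tendsto_const, of g 0 _ 1] by simp
  ultimately show ?thesis by (rule tendsto_sandwich[OF _ _ _ tendsto_const])
qed

end
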